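(* Let $a,b$ be real numbers with $b\ge a>1$. Then the functions $$W(t)=\sum_{j=0}^\infty a^{-j}\cos(b^jt),\qquad S(t)=\sum_{j=0}^\infty a^{-j}\sin(b^jt),\qquad t\in\mathbb{R},$$ are bounded and continuous on $\mathbb{R}$, but neither $W$ nor $S$ is differentiable at any point $t_0\in\mathbb{R}$. *)

theory Defs
  imports "HOL-Analysis.Analysis"
begin

definition weierstrass_W :: "real \<Rightarrow> real \<Rightarrow> real \<Rightarrow> real" where
  "weierstrass_W a b t = (\<Sum>j. a powr (- real j) * cos (b ^ j * t))"

definition weierstrass_S :: "real \<Rightarrow> real \<Rightarrow> real \<Rightarrow> real" where
  "weierstrass_S a b t = (\<Sum>j. a powr (- real j) * sin (b ^ j * t))"

end

theory Submission
  imports Defs "HOL-Probability.Characteristic_Functions" "HOL-Real_Asymp.Real_Asymp"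
begin

text \<open>
  Both functions are instances of \<open>F t = (\<Sum>j. Re (\<omega> * iexp (b ^ j * t)) / a ^ j)\<close> with
  \<open>norm \<omega> = 1\<close> (\<open>\<omega> = 1\<close> for W, \<open>\<omega> = -\<i>\<close> for S); boundedness and continuity come from uniform
  convergence. For nondifferentiability, integrate \<open>F (t0 + h * x)\<close> against a complex wavelet
  \<open>\<psi> x\<close> with respect to the standard Gaussian measure. Since \<open>\<psi>\<close> has vanishing zeroth and first
  moments, differentiability of F at \<open>t0\<close> would make this integral \<open>o(h)\<close>. On the other hand the
  integral can be computed term by term from the Gaussian characteristic function, and the
  Fourier transform of \<open>\<psi>\<close> is nonnegative, close to 1 at the frequency \<open>\<sigma>\<close>, and small at \<open>-\<sigma>\<close>
  and away from \<open>\<sigma>\<close>. At the scale \<open>h = \<sigma> / b ^ k\<close> the k-th term therefore dominates, and for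
  \<open>a \<le> b\<close> and large \<open>\<sigma>\<close> the integral has modulus at least \<open>h / (4 * \<sigma>)\<close>.
\<close>

section \<open>Gaussian integrals\<close>

abbreviation \<gamma> :: "real measure" where "\<gamma> \<equiv> std_normal_distribution"

interpretation gauss: real_distribution \<gamma>
  by (rule real_dist_normal_dist)

lemma (in real_distribution) char_difference_quotient:
  assumes "integrable M (\<lambda>x. \<bar>x\<bar>)"
  shows "((\<lambda>h. (char M (t + h) - char M t) / of_real h) \<longlongrightarrow> (CLINT x|M. \<i> * x * iexp (t * x))) (at 0)"
  unfolding tendsto_at_iff_sequentially comp_def
proof safe
  fix X :: "nat \<Rightarrow> real" assume X: "\<forall>n. X n \<in> UNIV - {0}" "X \<longlonglongrightarrow> 0"
  define q where "q n x = (iexp ((t + X n) * x) - iexp (t * x)) / of_real (X n)" for n x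
  have "(\<lambda>n. CLINT x|M. q n x) \<longlonglongrightarrow> (CLINT x|M. \<i> * x * iexp (t * x))"
  proof (rule integral_dominated_convergence[where w = "\<lambda>x. \<bar>x\<bar>"])
    show "AE x in M. (\<lambda>n. q n x) \<longlonglongrightarrow> \<i> * x * iexp (t * x)"
    proof (intro AE_I2)
      fix x :: real
      have "((\<lambda>h. exp (\<i> * h * x)) has_field_derivative \<i> * x) (at 0)"
        by (auto intro!: derivative_eq_intros)
      then have "((\<lambda>h. (exp (\<i> * h * x) - 1) / h) \<longlongrightarrow> \<i> * x) (at 0)"
        by (simp add: DERIV_def)
      then have "(\<lambda>n. (exp (\<i> * of_real (X n) * x) - 1) / of_real (X n)) \<longlonglongrightarrow> \<i> * x"
        by (rule filterlim_compose)
          (use X tendsto_of_real[OF X(2), where 'a=complex] in \<open>auto intro!: filterlim_atI\<close>)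
      then have "(\<lambda>n. iexp (t * x) * ((exp (\<i> * of_real (X n) * x) - 1) / of_real (X n)))
        \<longlonglongrightarrow> iexp (t * x) * (\<i> * x)"
        by (intro tendsto_mult tendsto_const)
      then show "(\<lambda>n. q n x) \<longlonglongrightarrow> \<i> * x * iexp (t * x)"
        by (simp add: q_def field_simps exp_add[symmetric])
    qed
    show "AE x in M. norm (q n x) \<le> \<bar>x\<bar>" for n
    proof (intro AE_I2)
      fix x :: real
      have "q n x = iexp (t * x) * (iexp (X n * x) - 1) / of_real (X n)"
        by (simp add: q_def field_simps exp_add[symmetric])
      then have "norm (q n x) = cmod (iexp (X n * x) - 1) / \<bar>X n\<bar>"
        by (simp add: norm_mult norm_divide)
      also have "\<dots> \<le> \<bar>X n * x\<bar> / \<bar>X n\<bar>"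
        using iexp_approx1[of "X n * x" 0] by (intro divide_right_mono) auto
      finally show "norm (q n x) \<le> \<bar>x\<bar>"
        using X(1) by (simp add: abs_mult)
    qed
  qed (use assms in \<open>auto simp: q_def\<close>)
  moreover have "(CLINT x|M. q n x) = (char M (t + X n) - char M t) / of_real (X n)" for n
    unfolding q_def char_def by (simp add: integrable_iexp)
  ultimately show "(\<lambda>n. (char M (t + X n) - char M t) / of_real (X n))
    \<longlonglongrightarrow> (CLINT x|M. \<i> * x * iexp (t * x))"
    by simp
qed

lemma has_bochner_integral_iexp_std_normal:
  "has_bochner_integral \<gamma> (\<lambda>x. iexp (t * x)) (of_real (exp (-(t\<^sup>2) / 2)))"
  using char_std_normal_distribution[THEN fun_cong, of t] gauss.integrable_iexp[of "\<lambda>x. t * x"]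
  by (simp add: char_def has_bochner_integral_iff)

lemma has_bochner_integral_x_iexp_std_normal:
  "has_bochner_integral \<gamma> (\<lambda>x. x * iexp (t * x)) (\<i> * of_real (t * exp (-(t\<^sup>2) / 2)))"
proof -
  have "integrable \<gamma> (\<lambda>x. \<bar>x\<bar>)"
    using integrable_std_normal_distribution_moment[of 1] by simp
  then have "((\<lambda>h. (exp (-((t + h)\<^sup>2) / 2) - exp (-(t\<^sup>2) / 2)) / of_real h)
      \<longlongrightarrow> (CLINT x|\<gamma>. \<i> * x * iexp (t * x))) (at 0)"
    using gauss.char_difference_quotient by (simp add: char_std_normal_distribution)
  moreover have "((\<lambda>t. exp (-(t\<^sup>2) / 2)) has_field_derivative - t * exp (-(t\<^sup>2) / 2)) (at t)"
    by (auto intro!: derivative_eq_intros)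
  then have "((\<lambda>h. (exp (-((t + h)\<^sup>2) / 2) - exp (-(t\<^sup>2) / 2)) / h) \<longlongrightarrow> - t * exp (-(t\<^sup>2) / 2)) (at 0)"
    by (simp add: DERIV_def)
  from tendsto_of_real[OF this, where 'a = complex]
  have "((\<lambda>h. (exp (-((t + h)\<^sup>2) / 2) - exp (-(t\<^sup>2) / 2)) / of_real h :: complex)
      \<longlongrightarrow> - t * exp (-(t\<^sup>2) / 2)) (at 0)"
    by simp
  ultimately have "\<i> * (CLINT x|\<gamma>. x * iexp (t * x)) = - t * exp (-(t\<^sup>2) / 2)"
    unfolding mult.assoc integral_mult_right_zero by (rule tendsto_unique[rotated]) simp
  moreover have "(CLINT x|\<gamma>. x * iexp (t * x)) = - \<i> * (\<i> * (CLINT x|\<gamma>. x * iexp (t * x)))"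
    by simp
  ultimately have "(CLINT x|\<gamma>. x * iexp (t * x)) = \<i> * of_real (t * exp (-(t\<^sup>2) / 2))"
    by simp
  moreover have "integrable \<gamma> (\<lambda>x. x * iexp (t * x))"
    by (rule Bochner_Integration.integrable_bound
      [OF \<open>integrable \<gamma> (\<lambda>x. \<bar>x\<bar>)\<close>]) (auto simp: norm_mult)
  ultimately show ?thesis
    by (simp add: has_bochner_integral_iff)
qed

section \<open>A wavelet with explicit Gaussian Fourier transform\<close>

text \<open>
  Against the Gaussian measure the Fourier transform of \<open>wavelet \<sigma>\<close> is \<open>wavelet_ft \<sigma>\<close>, which
  equals \<open>exp (-(\<sigma>\<^sup>2 + \<mu>\<^sup>2) / 2) * (p - 1)\<^sup>2 * (p + 1) / p\<close> with \<open>p = exp (\<sigma> * \<mu> / 2)\<close>. It is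
  nonnegative and vanishes to second order at \<open>\<mu> = 0\<close>, which is why \<open>wavelet \<sigma>\<close> has vanishing
  zeroth and first moments.
\<close>

definition wavelet :: "real \<Rightarrow> real \<Rightarrow> complex" where
  "wavelet \<sigma> x = iexp (- \<sigma> * x) - of_real (exp (-(\<sigma>\<^sup>2) / 2))
     - of_real (exp (- 3 * \<sigma>\<^sup>2 / 8)) * (iexp (- (\<sigma> / 2) * x) - iexp (\<sigma> / 2 * x))"

definition wavelet_ft :: "real \<Rightarrow> real \<Rightarrow> real" where
  "wavelet_ft \<sigma> \<mu> = exp (-(\<sigma>\<^sup>2 + \<mu>\<^sup>2) / 2)
    * (exp (\<sigma> * \<mu>) - 1 - exp (\<sigma> * \<mu> / 2) + exp (- (\<sigma> * \<mu> / 2)))"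

lemma iexp_mult_iexp: "iexp (s * x) * iexp (t * x) = iexp ((s + t) * x)"
  by (simp add: ring_distribs exp_add)

lemma has_bochner_integral_iexp_wavelet:
  "has_bochner_integral \<gamma> (\<lambda>x. iexp (\<mu> * x) * wavelet \<sigma> x) (of_real (wavelet_ft \<sigma> \<mu>))"
proof -
  have "iexp (\<mu> * x) * wavelet \<sigma> x
      = iexp (\<mu> * x) * iexp (- \<sigma> * x) - of_real (exp (-(\<sigma>\<^sup>2) / 2)) * iexp (\<mu> * x)
         - of_real (exp (- 3 * \<sigma>\<^sup>2 / 8))
           * (iexp (\<mu> * x) * iexp (- (\<sigma> / 2) * x) - iexp (\<mu> * x) * iexp (\<sigma> / 2 * x))" for x
    unfolding wavelet_def by (simp add: algebra_simps)
  then have integrand: "iexp (\<mu> * x) * wavelet \<sigma> x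
      = iexp ((\<mu> + - \<sigma>) * x) - of_real (exp (-(\<sigma>\<^sup>2) / 2)) * iexp (\<mu> * x)
         - of_real (exp (- 3 * \<sigma>\<^sup>2 / 8))
           * (iexp ((\<mu> + - (\<sigma> / 2)) * x) - iexp ((\<mu> + \<sigma> / 2) * x))" for x
    by (simp only: iexp_mult_iexp)
  have "exp (-((\<mu> + - \<sigma>)\<^sup>2) / 2) = exp (-(\<sigma>\<^sup>2 + \<mu>\<^sup>2) / 2) * exp (\<sigma> * \<mu>)"
    and "exp (-(\<sigma>\<^sup>2) / 2) * exp (-(\<mu>\<^sup>2) / 2) = exp (-(\<sigma>\<^sup>2 + \<mu>\<^sup>2) / 2)"
    and "exp (- 3 * \<sigma>\<^sup>2 / 8) * exp (-((\<mu> + - (\<sigma> / 2))\<^sup>2) / 2)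
           = exp (-(\<sigma>\<^sup>2 + \<mu>\<^sup>2) / 2) * exp (\<sigma> * \<mu> / 2)"
    and "exp (- 3 * \<sigma>\<^sup>2 / 8) * exp (-((\<mu> + \<sigma> / 2)\<^sup>2) / 2)
           = exp (-(\<sigma>\<^sup>2 + \<mu>\<^sup>2) / 2) * exp (- (\<sigma> * \<mu> / 2))"
    by (simp_all add: mult_exp_exp power2_eq_square field_simps)
  then have "wavelet_ft \<sigma> \<mu> = exp (-((\<mu> + - \<sigma>)\<^sup>2) / 2) - exp (-(\<sigma>\<^sup>2) / 2) * exp (-(\<mu>\<^sup>2) / 2)
         - exp (- 3 * \<sigma>\<^sup>2 / 8) * (exp (-((\<mu> + - (\<sigma> / 2))\<^sup>2) / 2) - exp (-((\<mu> + \<sigma> / 2)\<^sup>2) / 2))"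
    unfolding wavelet_ft_def by (simp only:) (simp add: algebra_simps)
  then have transform: "complex_of_real (wavelet_ft \<sigma> \<mu>)
      = of_real (exp (-((\<mu> + - \<sigma>)\<^sup>2) / 2)) - of_real (exp (-(\<sigma>\<^sup>2) / 2)) * of_real (exp (-(\<mu>\<^sup>2) / 2))
         - of_real (exp (- 3 * \<sigma>\<^sup>2 / 8))
           * (of_real (exp (-((\<mu> + - (\<sigma> / 2))\<^sup>2) / 2)) - of_real (exp (-((\<mu> + \<sigma> / 2)\<^sup>2) / 2)))"
    by (simp only: of_real_diff of_real_mult)
  show ?thesis
    unfolding integrand transform
    by (intro has_bochner_integral_diff has_bochner_integral_mult_right
      has_bochner_integral_iexp_std_normal)
qed

lemma has_bochner_integral_wavelet: "has_bochner_integral \<gamma> (wavelet \<sigma>) 0"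
  using has_bochner_integral_iexp_wavelet[of 0 \<sigma>] by (simp add: wavelet_ft_def)

lemma has_bochner_integral_x_wavelet: "has_bochner_integral \<gamma> (\<lambda>x. x * wavelet \<sigma> x) 0"
proof -
  have "x * wavelet \<sigma> x
      = x * iexp (- \<sigma> * x) - of_real (exp (-(\<sigma>\<^sup>2) / 2)) * (x * iexp (0 * x))
         - of_real (exp (- 3 * \<sigma>\<^sup>2 / 8)) * (x * iexp (- (\<sigma> / 2) * x) - x * iexp (\<sigma> / 2 * x))" for x
    unfolding wavelet_def by (simp add: algebra_simps)
  then have "has_bochner_integral \<gamma> (\<lambda>x. x * wavelet \<sigma> x)
      (\<i> * of_real (- \<sigma> * exp (-((- \<sigma>)\<^sup>2) / 2))
         - of_real (exp (-(\<sigma>\<^sup>2) / 2)) * (\<i> * of_real (0 * exp (-(0\<^sup>2) / 2)))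
         - of_real (exp (- 3 * \<sigma>\<^sup>2 / 8))
           * (\<i> * of_real (- (\<sigma> / 2) * exp (-((- (\<sigma> / 2))\<^sup>2) / 2))
              - \<i> * of_real (\<sigma> / 2 * exp (-((\<sigma> / 2)\<^sup>2) / 2))))"
    by (simp only:) (intro has_bochner_integral_diff has_bochner_integral_mult_right
        has_bochner_integral_x_iexp_std_normal)
  moreover have "exp (- 3 * \<sigma>\<^sup>2 / 8) * exp (-((\<sigma> / 2)\<^sup>2) / 2) = exp (-(\<sigma>\<^sup>2) / 2)"
    by (simp add: mult_exp_exp power2_eq_square field_simps)
  ultimately show ?thesis
    by (simp add: algebra_simps flip: of_real_mult)
qed

lemma norm_wavelet_le: "norm (wavelet \<sigma> x) \<le> 4"
proof -
  have D: "norm (iexp (- (\<sigma> / 2) * x) - iexp (\<sigma> / 2 * x)) \<le> 2"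
    using norm_triangle_ineq4[of "iexp (- (\<sigma> / 2) * x)" "iexp (\<sigma> / 2 * x)"] by simp
  have "norm (wavelet \<sigma> x) \<le> norm (iexp (- \<sigma> * x)) + norm (complex_of_real (exp (-(\<sigma>\<^sup>2) / 2)))
      + norm (of_real (exp (- 3 * \<sigma>\<^sup>2 / 8)) * (iexp (- (\<sigma> / 2) * x) - iexp (\<sigma> / 2 * x)))"
    unfolding wavelet_def
      by (rule order.trans[OF norm_triangle_ineq4 add_right_mono[OF norm_triangle_ineq4]])
  also have "\<dots> \<le> 1 + 1 + 1 * 2"
    unfolding norm_mult using D by (intro add_mono mult_mono) auto
  finally show ?thesis
    by simp
qed

lemma continuous_on_wavelet: "continuous_on UNIV (wavelet \<sigma>)"
  unfolding wavelet_def by (intro continuous_intros)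

lemma wavelet_ft_nonneg: "0 \<le> wavelet_ft \<sigma> \<mu>"
proof -
  define p where "p = exp (\<sigma> * \<mu> / 2)"
  have "p > 0"
    by (simp add: p_def)
  have "exp (\<sigma> * \<mu>) - 1 - exp (\<sigma> * \<mu> / 2) + exp (- (\<sigma> * \<mu> / 2)) = (p - 1)\<^sup>2 * (p + 1) / p"
    using \<open>p > 0\<close> by (simp add: p_def field_simps power2_eq_square exp_minus flip: exp_add)
  also have "\<dots> \<ge> 0"
    using \<open>p > 0\<close> by simp
  finally show ?thesis
    unfolding wavelet_ft_def by simp
qed

definition wavelet_response :: "real \<Rightarrow> complex \<Rightarrow> real \<Rightarrow> real \<Rightarrow> complex" where
  "wavelet_response \<sigma> \<omega> \<theta> \<mu> =
     (\<omega> * iexp \<theta> * of_real (wavelet_ft \<sigma> \<mu>)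
       + cnj \<omega> * iexp (- \<theta>) * of_real (wavelet_ft \<sigma> (- \<mu>))) / 2"

lemma has_bochner_integral_Re_wavelet:
  "has_bochner_integral \<gamma> (\<lambda>x. Re (\<omega> * iexp (\<theta> + \<mu> * x)) * wavelet \<sigma> x) (wavelet_response \<sigma> \<omega> \<theta> \<mu>)"
proof -
  have "complex_of_real (Re (\<omega> * iexp (\<theta> + \<mu> * x)))
      = (\<omega> * iexp (\<theta> + \<mu> * x) + cnj (\<omega> * iexp (\<theta> + \<mu> * x))) / 2" for x
    by (simp only: complex_add_cnj) simp
  also have "\<dots> x = (\<omega> * (iexp \<theta> * iexp (\<mu> * x)) + cnj \<omega> * (iexp (- \<theta>) * iexp (- (\<mu> * x)))) / 2"
    for x
  proof -
    have "iexp (\<theta> + \<mu> * x) = iexp \<theta> * iexp (\<mu> * x)" "cnj (iexp t) = iexp (- t)" for t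
      by (simp_all add: distrib_left exp_add exp_cnj)
    then show ?thesis
      by (simp only: complex_cnj_mult)
  qed
  finally have Re_eq: "complex_of_real (Re (\<omega> * iexp (\<theta> + \<mu> * x)))
      = (\<omega> * (iexp \<theta> * iexp (\<mu> * x)) + cnj \<omega> * (iexp (- \<theta>) * iexp (- (\<mu> * x)))) / 2" for x .
  have "Re (\<omega> * iexp (\<theta> + \<mu> * x)) * wavelet \<sigma> x
      = \<omega> * iexp \<theta> / 2 * (iexp (\<mu> * x) * wavelet \<sigma> x)
        + cnj \<omega> * iexp (- \<theta>) / 2 * (iexp (- \<mu> * x) * wavelet \<sigma> x)" for x
    unfolding Re_eq by (simp add: field_simps)
  moreover have "wavelet_response \<sigma> \<omega> \<theta> \<mu>
      = \<omega> * iexp \<theta> / 2 * of_real (wavelet_ft \<sigma> \<mu>)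
        + cnj \<omega> * iexp (- \<theta>) / 2 * of_real (wavelet_ft \<sigma> (- \<mu>))"
    by (simp add: wavelet_response_def field_simps)
  moreover have "has_bochner_integral \<gamma>
      (\<lambda>x. \<omega> * iexp \<theta> / 2 * (iexp (\<mu> * x) * wavelet \<sigma> x)
        + cnj \<omega> * iexp (- \<theta>) / 2 * (iexp (- \<mu> * x) * wavelet \<sigma> x))
      (\<omega> * iexp \<theta> / 2 * of_real (wavelet_ft \<sigma> \<mu>)
        + cnj \<omega> * iexp (- \<theta>) / 2 * of_real (wavelet_ft \<sigma> (- \<mu>)))"
    by (intro has_bochner_integral_add has_bochner_integral_mult_right
      has_bochner_integral_iexp_wavelet)
  ultimately show ?thesis
    by simp
qed

definition wavelet_ft_sym :: "real \<Rightarrow> real \<Rightarrow> real" where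
  "wavelet_ft_sym \<sigma> \<mu> = wavelet_ft \<sigma> \<mu> + wavelet_ft \<sigma> (- \<mu>)"

lemma wavelet_ft_sym_eq:
  "wavelet_ft_sym \<sigma> \<mu> = exp (-(\<sigma>\<^sup>2 + \<mu>\<^sup>2) / 2) * (exp (\<sigma> * \<mu>) + exp (- (\<sigma> * \<mu>)) - 2)"
  unfolding wavelet_ft_sym_def wavelet_ft_def by (simp add: algebra_simps)

lemma wavelet_ft_sym_nonneg: "0 \<le> wavelet_ft_sym \<sigma> \<mu>"
  unfolding wavelet_ft_sym_def by (intro add_nonneg_nonneg wavelet_ft_nonneg)

lemma wavelet_ft_sym_le:
  assumes "0 \<le> \<sigma> * \<mu>"
  shows "wavelet_ft_sym \<sigma> \<mu> \<le> 2 * exp (-((\<mu> - \<sigma>)\<^sup>2) / 2)"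
proof -
  have "exp (- (\<sigma> * \<mu>)) \<le> exp (\<sigma> * \<mu>)"
    using assms by simp
  then have "exp (\<sigma> * \<mu>) + exp (- (\<sigma> * \<mu>)) - 2 \<le> 2 * exp (\<sigma> * \<mu>)"
    by linarith
  then have "wavelet_ft_sym \<sigma> \<mu> \<le> exp (-(\<sigma>\<^sup>2 + \<mu>\<^sup>2) / 2) * (2 * exp (\<sigma> * \<mu>))"
    unfolding wavelet_ft_sym_eq by (intro mult_left_mono) auto
  also have "\<dots> = 2 * exp (-((\<mu> - \<sigma>)\<^sup>2) / 2)"
    by (simp add: mult_exp_exp power2_eq_square field_simps)
  finally show ?thesis .
qed

lemma wavelet_ft_sym_le_two:
  assumes "0 \<le> \<sigma> * \<mu>"
  shows "wavelet_ft_sym \<sigma> \<mu> \<le> 2"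
proof -
  have "exp (-((\<mu> - \<sigma>)\<^sup>2) / 2) \<le> 1"
    by simp
  then show ?thesis
    using wavelet_ft_sym_le[OF assms] by linarith
qed

lemma exp_add_exp_neg_le:
  fixes y :: real
  assumes "0 \<le> y"
  shows "exp y + exp (- y) - 2 \<le> y\<^sup>2 * exp y"
proof -
  define q where "q = exp (y / 2)"
  have "q > 0" "exp y = q\<^sup>2" "exp (- y) = 1 / q\<^sup>2"
    by (simp_all add: q_def power2_eq_square exp_minus field_simps flip: exp_add)
  have "0 \<le> 1 - exp (- y)" "1 - exp (- y) \<le> y"
    using assms exp_ge_add_one_self[of "- y"] by auto
  moreover have "q - 1 / q = q * (1 - exp (- y))"
    using \<open>q > 0\<close> \<open>exp (- y) = 1 / q\<^sup>2\<close> by (simp add: field_simps power2_eq_square)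
  ultimately have "(q - 1 / q)\<^sup>2 \<le> (q * y)\<^sup>2"
    using \<open>q > 0\<close> by (intro power_mono) (auto intro: mult_left_mono)
  moreover have "exp y + exp (- y) - 2 = (q - 1 / q)\<^sup>2"
    using \<open>q > 0\<close> \<open>exp y = q\<^sup>2\<close> \<open>exp (- y) = 1 / q\<^sup>2\<close> by (simp add: field_simps power2_eq_square)
  ultimately show ?thesis
    using \<open>exp y = q\<^sup>2\<close> by (simp add: power_mult_distrib mult.commute)
qed

lemma wavelet_ft_sym_le_sq:
  assumes "0 \<le> \<sigma> * \<mu>"
  shows "wavelet_ft_sym \<sigma> \<mu> \<le> (\<sigma> * \<mu>)\<^sup>2 * exp (-((\<mu> - \<sigma>)\<^sup>2) / 2)"
proof -
  have "wavelet_ft_sym \<sigma> \<mu> \<le> exp (-(\<sigma>\<^sup>2 + \<mu>\<^sup>2) / 2) * ((\<sigma> * \<mu>)\<^sup>2 * exp (\<sigma> * \<mu>))"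
    unfolding wavelet_ft_sym_eq using assms by (intro mult_left_mono exp_add_exp_neg_le) auto
  also have "\<dots> = (\<sigma> * \<mu>)\<^sup>2 * exp (-((\<mu> - \<sigma>)\<^sup>2) / 2)"
    by (simp add: mult_exp_exp power2_eq_square field_simps)
  finally show ?thesis .
qed

lemma wavelet_ft_diff_ge: "1 - 3 * exp (-(\<sigma>\<^sup>2) / 2) \<le> wavelet_ft \<sigma> \<sigma> - wavelet_ft \<sigma> (- \<sigma>)"
proof -
  define x where "x = exp (-(\<sigma>\<^sup>2) / 2)"
  have "0 < x" "x \<le> 1"
    by (auto simp: x_def)
  have "wavelet_ft \<sigma> \<sigma> - wavelet_ft \<sigma> (- \<sigma>)
    = x\<^sup>2 * (1 / x\<^sup>2 - 1 - 1 / x + x) - x\<^sup>2 * (x\<^sup>2 - 1 - x + 1 / x)"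
    unfolding wavelet_ft_def x_def
    by (simp add: power2_eq_square exp_minus field_simps flip: exp_add)
  also have "\<dots> = 1 - 2 * x + 2 * x ^ 3 - x ^ 4"
    using \<open>0 < x\<close> by (simp add: field_simps power2_eq_square power3_eq_cube power4_eq_xxxx)
  also have "\<dots> \<ge> 1 - 3 * x"
  proof -
    have "x ^ 4 = x * x ^ 3"
      by (simp add: eval_nat_numeral)
    also have "\<dots> \<le> x"
      using \<open>0 < x\<close> \<open>x \<le> 1\<close> by (intro mult_left_le power_le_one) auto
    finally have "x ^ 4 \<le> x" .
    moreover have "0 \<le> x ^ 3"
      using \<open>0 < x\<close> by simp
    ultimately show ?thesis
      by linarith
  qed
  finally show ?thesis
    by (simp add: x_def)
qed

lemma norm_wavelet_response_le:
  assumes "norm \<omega> \<le> 1"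
  shows "norm (wavelet_response \<sigma> \<omega> \<theta> \<mu>) \<le> wavelet_ft_sym \<sigma> \<mu> / 2"
proof -
  have "norm (\<omega> * iexp \<theta> * of_real (wavelet_ft \<sigma> \<mu>)) \<le> wavelet_ft \<sigma> \<mu>"
    and "norm (cnj \<omega> * iexp (- \<theta>) * of_real (wavelet_ft \<sigma> (- \<mu>))) \<le> wavelet_ft \<sigma> (- \<mu>)"
    using assms wavelet_ft_nonneg[of \<sigma>] by (simp_all add: norm_mult mult_left_le_one_le)
  then have "norm (\<omega> * iexp \<theta> * of_real (wavelet_ft \<sigma> \<mu>)
      + cnj \<omega> * iexp (- \<theta>) * of_real (wavelet_ft \<sigma> (- \<mu>))) \<le> wavelet_ft_sym \<sigma> \<mu>"
    unfolding wavelet_ft_sym_def by (intro norm_triangle_le add_mono)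
  then show ?thesis
    unfolding wavelet_response_def by simp
qed

lemma norm_wavelet_response_ge:
  assumes "norm \<omega> = 1"
  shows "(wavelet_ft \<sigma> \<sigma> - wavelet_ft \<sigma> (- \<sigma>)) / 2 \<le> norm (wavelet_response \<sigma> \<omega> \<theta> \<sigma>)"
proof -
  have "norm (\<omega> * iexp \<theta> * of_real (wavelet_ft \<sigma> \<mu>)) = wavelet_ft \<sigma> \<mu>"
    and "norm (cnj \<omega> * iexp (- \<theta>) * of_real (wavelet_ft \<sigma> \<mu>)) = wavelet_ft \<sigma> \<mu>" for \<mu>
    using assms wavelet_ft_nonneg[of \<sigma> \<mu>] by (simp_all add: norm_mult)
  then show ?thesis
    unfolding wavelet_response_def
    using norm_diff_ineq[of "\<omega> * iexp \<theta> * of_real (wavelet_ft \<sigma> \<sigma>)"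
        "cnj \<omega> * iexp (- \<theta>) * of_real (wavelet_ft \<sigma> (- \<sigma>))"]
    by (simp add: divide_right_mono)
qed

section \<open>The lacunary sum\<close>

text \<open>
  The conditions make the diagonal term of the lacunary sum at least \<open>13/32\<close>, while the terms
  above and below the diagonal add up to at most \<open>1/64\<close> and \<open>1/16\<close>.
\<close>

definition admissible_scale :: "real \<Rightarrow> real \<Rightarrow> bool" where
  "admissible_scale b \<sigma> \<longleftrightarrow> 0 < \<sigma> \<and> exp (-(\<sigma>\<^sup>2) / 2) \<le> 1 / 16
     \<and> exp (-(\<sigma>\<^sup>2 * (b - 1)\<^sup>2) / 8) \<le> 1 / 65 \<and> \<sigma> ^ 4 * exp (-(\<sigma>\<^sup>2) / 8) \<le> (b - 1) / 16"

lemma admissible_scale_exists: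
  assumes "1 < b"
  obtains \<sigma> where "admissible_scale b \<sigma>"
proof -
  have "(b - 1)\<^sup>2 > 0" "(b - 1) / 16 > 0"
    using assms by auto
  then have "\<forall>\<^sub>F \<sigma> in at_top. admissible_scale b \<sigma>"
    unfolding admissible_scale_def by (intro eventually_conj; real_asymp)
  then show ?thesis
    using that by (auto simp: eventually_at_top_linorder)
qed

lemma exp_neg_square_le_power:
  fixes \<sigma> s d :: real
  assumes "0 \<le> d" "real n * d \<le> s"
  shows "exp (-(\<sigma>\<^sup>2 * s\<^sup>2) / 2) \<le> exp (-(\<sigma>\<^sup>2 * d\<^sup>2) / 2) ^ n"
proof -
  have "real n \<le> (real n)\<^sup>2"
    by (cases n) (auto simp: power2_eq_square)
  then have "real n * d\<^sup>2 \<le> (real n * d)\<^sup>2"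
    unfolding power_mult_distrib by (intro mult_right_mono) auto
  also have "\<dots> \<le> s\<^sup>2"
    using assms by (intro power_mono) auto
  finally have "\<sigma>\<^sup>2 * (real n * d\<^sup>2) \<le> \<sigma>\<^sup>2 * s\<^sup>2"
    by (intro mult_left_mono) auto
  then have "exp (-(\<sigma>\<^sup>2 * s\<^sup>2) / 2) \<le> exp (real n * (-(\<sigma>\<^sup>2 * d\<^sup>2) / 2))"
    by (simp add: mult.left_commute)
  then show ?thesis
    by (simp only: exp_of_nat_mult)
qed

lemma wavelet_ft_sym_le_distance:
  assumes "0 \<le> \<sigma> * \<mu>" "real n * d \<le> \<bar>\<mu> / \<sigma> - 1\<bar>" "0 \<le> d" "\<sigma> \<noteq> 0"
  shows "wavelet_ft_sym \<sigma> \<mu> \<le> 2 * exp (-(\<sigma>\<^sup>2 * d\<^sup>2) / 2) ^ n"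
proof -
  have "(\<mu> - \<sigma>)\<^sup>2 = \<sigma>\<^sup>2 * (\<mu> / \<sigma> - 1)\<^sup>2"
    using assms(4) by (simp add: power2_eq_square field_simps)
  then have "exp (-((\<mu> - \<sigma>)\<^sup>2) / 2) = exp (-(\<sigma>\<^sup>2 * \<bar>\<mu> / \<sigma> - 1\<bar>\<^sup>2) / 2)"
    by simp
  also have "\<dots> \<le> exp (-(\<sigma>\<^sup>2 * d\<^sup>2) / 2) ^ n"
    using assms(3,2) by (rule exp_neg_square_le_power)
  finally show ?thesis
    using wavelet_ft_sym_le[OF assms(1)] by linarith
qed

lemma wavelet_ft_sym_upscaled_le:
  assumes "1 < b" "0 < \<sigma>"
  shows "wavelet_ft_sym \<sigma> (\<sigma> * b ^ m) / 2 \<le> exp (-(\<sigma>\<^sup>2 * (b - 1)\<^sup>2) / 8) ^ m"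
proof -
  have "real m * (b - 1) \<le> b ^ m - 1" "0 \<le> real m * (b - 1)"
    using Bernoulli_inequality[of "b - 1" m] assms by auto
  moreover have "\<bar>\<sigma> * b ^ m / \<sigma> - 1\<bar> = b ^ m - 1"
    using assms by simp
  ultimately have "real m * ((b - 1) / 2) \<le> \<bar>\<sigma> * b ^ m / \<sigma> - 1\<bar>"
    by linarith
  then have "wavelet_ft_sym \<sigma> (\<sigma> * b ^ m) \<le> 2 * exp (-(\<sigma>\<^sup>2 * ((b - 1) / 2)\<^sup>2) / 2) ^ m"
    using assms by (intro wavelet_ft_sym_le_distance) auto
  then show ?thesis
    by (simp add: power_divide)
qed

lemma wavelet_ft_sym_downscaled_le:
  assumes "1 < a" "a \<le> b" "0 < \<sigma>"
  shows "a ^ m * wavelet_ft_sym \<sigma> (\<sigma> / b ^ m) / 2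
    \<le> 2 * exp (-(\<sigma>\<^sup>2 * (b - 1)\<^sup>2) / 8) ^ m + \<sigma> ^ 4 * exp (-(\<sigma>\<^sup>2) / 8) / 2 / b ^ m"
proof (cases "2 \<le> b ^ m")
  case False
  have "real m * ((b - 1) / 2) \<le> (b ^ m - 1) / 2"
    using Bernoulli_inequality[of "b - 1" m] assms by simp
  also have "\<dots> \<le> (b ^ m - 1) / b ^ m"
    using False assms one_le_power[of b m] by (intro divide_left_mono) auto
  also have "\<dots> = \<bar>\<sigma> / b ^ m / \<sigma> - 1\<bar>"
    using assms one_le_power[of b m] by (simp add: field_simps)
  finally have "wavelet_ft_sym \<sigma> (\<sigma> / b ^ m) \<le> 2 * exp (-(\<sigma>\<^sup>2 * ((b - 1) / 2)\<^sup>2) / 2) ^ m"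
    using assms by (intro wavelet_ft_sym_le_distance) auto
  moreover have "a ^ m \<le> 2"
    using False assms power_mono[of a b m] by simp
  ultimately have "a ^ m * wavelet_ft_sym \<sigma> (\<sigma> / b ^ m) / 2 \<le> 2 * exp (-(\<sigma>\<^sup>2 * (b - 1)\<^sup>2) / 8) ^ m"
    using wavelet_ft_sym_nonneg[of \<sigma> "\<sigma> / b ^ m"]
    by (simp add: power_divide mult_right_mono[of "a ^ m" 2, THEN order.trans])
  moreover have "0 \<le> \<sigma> ^ 4 * exp (-(\<sigma>\<^sup>2) / 8) / 2 / b ^ m"
    using assms by simp
  ultimately show ?thesis
    by linarith
next
  case True
  have "b ^ m > 0"
    using assms by simp
  have "1 / 2 \<le> 1 - 1 / b ^ m"
    using True by (simp add: field_simps)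
  then have "(1 / 2)\<^sup>2 \<le> (1 - 1 / b ^ m)\<^sup>2"
    by (intro power_mono) auto
  then have "\<sigma>\<^sup>2 / 4 \<le> \<sigma>\<^sup>2 * (1 - 1 / b ^ m)\<^sup>2"
    using mult_left_mono[of "(1 / 2)\<^sup>2" "(1 - 1 / b ^ m)\<^sup>2" "\<sigma>\<^sup>2"] by (simp add: power_divide)
  then have "exp (-((\<sigma> / b ^ m - \<sigma>)\<^sup>2) / 2) \<le> exp (-(\<sigma>\<^sup>2) / 8)"
    by (simp add: power2_eq_square algebra_simps)
  then have "(\<sigma> * (\<sigma> / b ^ m))\<^sup>2 * exp (-((\<sigma> / b ^ m - \<sigma>)\<^sup>2) / 2)
      \<le> (\<sigma> * (\<sigma> / b ^ m))\<^sup>2 * exp (-(\<sigma>\<^sup>2) / 8)"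
    by (intro mult_left_mono) auto
  moreover have "wavelet_ft_sym \<sigma> (\<sigma> / b ^ m) \<le> (\<sigma> * (\<sigma> / b ^ m))\<^sup>2 * exp (-((\<sigma> / b ^ m - \<sigma>)\<^sup>2) / 2)"
    using assms by (intro wavelet_ft_sym_le_sq) simp
  ultimately have "wavelet_ft_sym \<sigma> (\<sigma> / b ^ m) \<le> (\<sigma> * (\<sigma> / b ^ m))\<^sup>2 * exp (-(\<sigma>\<^sup>2) / 8)"
    by linarith
  moreover have "a ^ m \<le> b ^ m"
    using assms by (intro power_mono) auto
  ultimately have "a ^ m * wavelet_ft_sym \<sigma> (\<sigma> / b ^ m) / 2
      \<le> b ^ m * ((\<sigma> * (\<sigma> / b ^ m))\<^sup>2 * exp (-(\<sigma>\<^sup>2) / 8)) / 2"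
    using wavelet_ft_sym_nonneg[of \<sigma> "\<sigma> / b ^ m"] \<open>b ^ m > 0\<close>
    by (intro divide_right_mono mult_mono) auto
  also have "\<dots> = \<sigma> ^ 4 * exp (-(\<sigma>\<^sup>2) / 8) / 2 / b ^ m"
    using \<open>b ^ m > 0\<close> by (simp add: power2_eq_square eval_nat_numeral field_simps)
  finally show ?thesis
    by (simp add: add_increasing)
qed

lemma sum_power_diff_le:
  fixes r :: real
  assumes "0 \<le> r" "r < 1"
  shows "(\<Sum>j<k. r ^ (k - j)) \<le> r / (1 - r)"
proof -
  have "(\<Sum>j<k. r ^ (k - j)) = (\<Sum>i<k. r ^ Suc i)"
    by (rule sum.reindex_bij_witness[of _ "\<lambda>i. k - Suc i" "\<lambda>j. k - Suc j"])
      (auto simp: Suc_diff_Suc simp flip: power_Suc)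
  also have "\<dots> = r * (1 - r ^ k) / (1 - r)"
    using assms by (simp add: sum_distrib_left[symmetric] sum_gp_strict)
  also have "\<dots> \<le> r / (1 - r)"
    using assms by (intro divide_right_mono mult_left_le) auto
  finally show ?thesis .
qed

definition response_majorant :: "real \<Rightarrow> real \<Rightarrow> real \<Rightarrow> nat \<Rightarrow> nat \<Rightarrow> real" where
  "response_majorant a b \<sigma> k j = a ^ k / a ^ j * wavelet_ft_sym \<sigma> (\<sigma> * b ^ j / b ^ k) / 2"

lemma response_majorant_nonneg: "0 < a \<Longrightarrow> 0 \<le> response_majorant a b \<sigma> k j"
  unfolding response_majorant_def using wavelet_ft_sym_nonneg by simp

lemma summable_response_majorant:
  assumes "1 < a" "0 < b"
  shows "summable (response_majorant a b \<sigma> k)"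
proof (rule summable_comparison_test'[OF summable_mult
  [OF summable_geometric[of "1 / a"], of "a ^ k"]])
  fix j
  have "a ^ k / a ^ j * wavelet_ft_sym \<sigma> (\<sigma> * b ^ j / b ^ k) \<le> a ^ k / a ^ j * 2"
    using assms by (intro mult_left_mono wavelet_ft_sym_le_two) (auto simp: mult.assoc[symmetric])
  then have "response_majorant a b \<sigma> k j \<le> a ^ k / a ^ j"
    using divide_right_mono[of _ _ 2] unfolding response_majorant_def by fastforce
  then show "norm (response_majorant a b \<sigma> k j) \<le> a ^ k * (1 / a) ^ j"
    using response_majorant_nonneg[of a b \<sigma> k j] assms by (simp add: power_one_over)
qed (use assms in auto)

lemma suminf_response_majorant_above_le:
  assumes "1 < a" "a \<le> b" "admissible_scale b \<sigma>"
  shows "(\<Sum>i. response_majorant a b \<sigma> k (i + Suc k)) \<le> 1 / 64"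
proof -
  define q where "q = exp (-(\<sigma>\<^sup>2 * (b - 1)\<^sup>2) / 8)"
  have "0 \<le> q" "q \<le> 1 / 65"
    using assms(3) by (auto simp: q_def admissible_scale_def)
  have "response_majorant a b \<sigma> k (i + Suc k) \<le> q ^ Suc i" for i
  proof -
    have "response_majorant a b \<sigma> k (i + Suc k) = wavelet_ft_sym \<sigma> (\<sigma> * b ^ Suc i) / 2 / a ^ Suc i"
      using assms by (simp add: response_majorant_def power_add field_simps)
    also have "\<dots> \<le> wavelet_ft_sym \<sigma> (\<sigma> * b ^ Suc i) / 2 / 1"
      using assms wavelet_ft_sym_nonneg one_le_power[of a "Suc i"] by (intro divide_left_mono) auto
    also have "\<dots> \<le> q ^ Suc i"
      unfolding q_def using assms wavelet_ft_sym_upscaled_le[of b \<sigma> "Suc i"]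
        by (simp add: admissible_scale_def)
    finally show ?thesis .
  qed
  moreover have "(\<lambda>i. q * q ^ i) sums (q * (1 / (1 - q)))"
    using \<open>0 \<le> q\<close> \<open>q \<le> 1 / 65\<close> by (intro sums_mult geometric_sums) auto
  moreover have "summable (\<lambda>i. response_majorant a b \<sigma> k (i + Suc k))"
    using assms by (intro summable_ignore_initial_segment summable_response_majorant) auto
  ultimately have "(\<Sum>i. response_majorant a b \<sigma> k (i + Suc k)) \<le> q / (1 - q)"
    using suminf_le[of "\<lambda>i. response_majorant a b \<sigma> k (i + Suc k)" "\<lambda>i. q * q ^ i"]
    by (simp add: sums_iff)
  also have "\<dots> \<le> 1 / 64"
    using \<open>0 \<le> q\<close> \<open>q \<le> 1 / 65\<close> by (simp add: field_simps)
  finally show ?thesis .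
qed

lemma sum_response_majorant_below_le:
  assumes "1 < a" "a \<le> b" "admissible_scale b \<sigma>"
  shows "(\<Sum>j<k. response_majorant a b \<sigma> k j) \<le> 1 / 16"
proof -
  define q where "q = exp (-(\<sigma>\<^sup>2 * (b - 1)\<^sup>2) / 8)"
  define C where "C = \<sigma> ^ 4 * exp (-(\<sigma>\<^sup>2) / 8)"
  have "0 \<le> q" "q \<le> 1 / 65" "0 \<le> C" "C \<le> (b - 1) / 16" "0 < \<sigma>"
    using assms(3) by (auto simp: q_def C_def admissible_scale_def)
  have "response_majorant a b \<sigma> k j \<le> 2 * q ^ (k - j) + C / 2 * (1 / b) ^ (k - j)" if "j < k" for j
  proof -
    have "response_majorant a b \<sigma> k j = a ^ (k - j) * wavelet_ft_sym \<sigma> (\<sigma> / b ^ (k - j)) / 2"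
      using assms that by (simp add: response_majorant_def power_diff)
    also have "\<dots> \<le> 2 * q ^ (k - j) + C / 2 * (1 / b) ^ (k - j)"
      unfolding q_def C_def using assms \<open>0 < \<sigma>\<close> wavelet_ft_sym_downscaled_le[of a b \<sigma> "k - j"]
      by (simp add: power_one_over)
    finally show ?thesis .
  qed
  then have "(\<Sum>j<k. response_majorant a b \<sigma> k j)
    \<le> (\<Sum>j<k. 2 * q ^ (k - j) + C / 2 * (1 / b) ^ (k - j))"
    by (intro sum_mono) auto
  also have "\<dots> = 2 * (\<Sum>j<k. q ^ (k - j)) + C / 2 * (\<Sum>j<k. (1 / b) ^ (k - j))"
    by (simp add: sum.distrib sum_distrib_left)
  also have "\<dots> \<le> 2 * (q / (1 - q)) + C / 2 * ((1 / b) / (1 - 1 / b))"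
    using assms \<open>0 \<le> q\<close> \<open>q \<le> 1 / 65\<close> \<open>0 \<le> C\<close>
    by (intro add_mono mult_left_mono sum_power_diff_le) auto
  also have "\<dots> \<le> 1 / 16"
  proof -
    have "q / (1 - q) \<le> 1 / 64"
      using \<open>0 \<le> q\<close> \<open>q \<le> 1 / 65\<close> by (simp add: field_simps)
    moreover have "C / 2 * ((1 / b) / (1 - 1 / b)) \<le> 1 / 32"
      using assms \<open>C \<le> (b - 1) / 16\<close> by (simp add: field_simps)
    ultimately show ?thesis
      by linarith
  qed
  finally show ?thesis .
qed

lemma suminf_response_majorant_off_diagonal_le:
  assumes "1 < a" "a \<le> b" "admissible_scale b \<sigma>"
  shows "suminf (response_majorant a b \<sigma> k) - response_majorant a b \<sigma> k k \<le> 5 / 64"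
proof -
  have "suminf (response_majorant a b \<sigma> k)
      = (\<Sum>i. response_majorant a b \<sigma> k (i + Suc k)) + (\<Sum>j<k. response_majorant a b \<sigma> k j)
        + response_majorant a b \<sigma> k k"
    using assms
      suminf_split_initial_segment[OF summable_response_majorant, of a b \<sigma> k "Suc k"] by simp
  then show ?thesis
    using suminf_response_majorant_above_le[OF assms, of k]
      sum_response_majorant_below_le[OF assms, of k]
    by linarith
qed

lemma norm_suminf_ge_term:
  fixes u :: "nat \<Rightarrow> 'a::banach"
  assumes "summable v" "\<And>j. norm (u j) \<le> v j"
  shows "norm (u k) - (suminf v - v k) \<le> norm (suminf u)"
proof -
  have "summable u"
    using assms by (intro summable_comparison_test[of u v]) auto
  then have "(\<lambda>j. u j - (if j = k then u k else 0)) sums (suminf u - u k)"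
    by (intro sums_diff summable_sums sums_single)
  moreover have "(\<lambda>j. v j - (if j = k then v k else 0)) sums (suminf v - v k)"
    using assms(1) by (intro sums_diff summable_sums sums_single)
  moreover have "norm (u j - (if j = k then u k else 0)) \<le> v j - (if j = k then v k else 0)" for j
    using assms(2) by simp
  ultimately have "norm (suminf u - u k) \<le> suminf v - v k"
    using norm_suminf_le[of "\<lambda>j. u j - (if j = k then u k else 0)"
      "\<lambda>j. v j - (if j = k then v k else 0)"]
    by (simp add: sums_iff)
  then show ?thesis
    using norm_triangle_ineq2[of "u k" "suminf u"]
      norm_minus_commute[of "u k" "suminf u"] by linarith
qed

lemma norm_lacunary_response_sum_ge:
  assumes "1 < a" "a \<le> b" "admissible_scale b \<sigma>" "norm \<omega> = 1"
  shows "1 / 4 \<le> norm (\<Sum>j. of_real (a ^ k / a ^ j)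
    * wavelet_response \<sigma> \<omega> (\<theta> j) (\<sigma> * b ^ j / b ^ k))"
proof -
  define u where "u = (\<lambda>j. of_real (a ^ k / a ^ j)
    * wavelet_response \<sigma> \<omega> (\<theta> j) (\<sigma> * b ^ j / b ^ k))"
  have "norm (u j) \<le> response_majorant a b \<sigma> k j" for j
  proof -
    have "norm (u j) = a ^ k / a ^ j * norm (wavelet_response \<sigma> \<omega> (\<theta> j) (\<sigma> * b ^ j / b ^ k))"
      unfolding u_def norm_mult norm_of_real using assms by simp
    also have "\<dots> \<le> a ^ k / a ^ j * (wavelet_ft_sym \<sigma> (\<sigma> * b ^ j / b ^ k) / 2)"
      using assms by (intro mult_left_mono norm_wavelet_response_le) auto
    finally show ?thesis
      by (simp add: response_majorant_def)
  qed
  then have "norm (u k) - (suminf (response_majorant a b \<sigma> k) - response_majorant a b \<sigma> k k)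
    \<le> norm (suminf u)"
    using assms by (intro norm_suminf_ge_term summable_response_majorant) auto
  moreover have "13 / 32 \<le> norm (u k)"
  proof -
    have "exp (-(\<sigma>\<^sup>2) / 2) \<le> 1 / 16" "0 < \<sigma>"
      using assms(3) unfolding admissible_scale_def by blast+
    then have "13 / 16 \<le> wavelet_ft \<sigma> \<sigma> - wavelet_ft \<sigma> (- \<sigma>)"
      using wavelet_ft_diff_ge[of \<sigma>] by linarith
    then have "13 / 32 \<le> (wavelet_ft \<sigma> \<sigma> - wavelet_ft \<sigma> (- \<sigma>)) / 2"
      by simp
    also have "\<dots> \<le> norm (u k)"
      using assms \<open>0 < \<sigma>\<close> norm_wavelet_response_ge[of \<omega> \<sigma> "\<theta> k"] by (simp add: u_def)
    finally show ?thesis .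
  qed
  ultimately have "1 / 4 \<le> norm (suminf u)"
    using suminf_response_majorant_off_diagonal_le[OF assms(1-3), of k] by linarith
  then show ?thesis
    unfolding u_def .
qed

section \<open>Kernels with vanishing moments\<close>

lemma DERIV_remainder_le:
  fixes f :: "real \<Rightarrow> real"
  assumes "DERIV f t0 :> D" "bounded (range f)"
  obtains K where "\<And>s. \<bar>f (t0 + s) - f t0 - D * s\<bar> \<le> K * \<bar>s\<bar>"
proof -
  obtain B where B: "\<And>t. \<bar>f t\<bar> \<le> B"
    using assms(2) by (auto simp: bounded_iff)
  have "((\<lambda>s. (f (t0 + s) - f t0) / s) \<longlongrightarrow> D) (at 0)"
    using assms(1) by (simp add: DERIV_def)
  from tendstoD[OF this zero_less_one] obtain \<delta> where "\<delta> > 0"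
    and \<delta>: "\<And>s. s \<noteq> 0 \<Longrightarrow> \<bar>s\<bar> < \<delta> \<Longrightarrow> \<bar>(f (t0 + s) - f t0) / s - D\<bar> < 1"
    by (auto simp: eventually_at dist_real_def)
  define K where "K = 1 + \<bar>D\<bar> + 2 * B / \<delta>"
  have "0 \<le> B"
    using B[of 0] by linarith
  have "\<bar>f (t0 + s) - f t0 - D * s\<bar> \<le> K * \<bar>s\<bar>" for s
  proof (cases "\<bar>s\<bar> < \<delta>")
    case True
    show ?thesis
    proof (cases "s = 0")
      case False
      then have "\<bar>f (t0 + s) - f t0 - D * s\<bar> = \<bar>(f (t0 + s) - f t0) / s - D\<bar> * \<bar>s\<bar>"
        by (simp add: abs_mult[symmetric] field_simps)
      also have "\<dots> \<le> 1 * \<bar>s\<bar>"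
        using \<delta>[OF False True] by (intro mult_right_mono) auto
      also have "\<dots> \<le> K * \<bar>s\<bar>"
        using \<open>0 \<le> B\<close> \<open>\<delta> > 0\<close> by (intro mult_right_mono) (auto simp: K_def)
      finally show ?thesis .
    qed simp
  next
    case False
    have "\<bar>f (t0 + s) - f t0 - D * s\<bar> \<le> 2 * B + \<bar>D\<bar> * \<bar>s\<bar>"
      using B[of "t0 + s"] B[of t0] by (simp only: abs_mult[symmetric])
    also have "2 * B \<le> 2 * B / \<delta> * \<bar>s\<bar>"
      using False \<open>0 \<le> B\<close> \<open>\<delta> > 0\<close> by (simp add: field_simps mult_left_mono)
    finally show ?thesis
      unfolding K_def by (simp add: algebra_simps)
  qed
  then show ?thesis
    using that by blast
qed

lemma DERIV_remainder_scaled_tendsto_zero: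
  fixes f :: "real \<Rightarrow> real"
  assumes "DERIV f t0 :> D" "h \<longlonglongrightarrow> 0" "\<And>n. h n \<noteq> 0"
  shows "(\<lambda>n. (f (t0 + h n * x) - f t0 - D * (h n * x)) / h n) \<longlonglongrightarrow> 0"
proof (cases "x = 0")
  case False
  have "((\<lambda>s. (f (t0 + s) - f t0) / s - D) \<longlongrightarrow> D - D) (at 0)"
    using assms(1) unfolding DERIV_def by (intro tendsto_diff tendsto_const)
  moreover have "filterlim (\<lambda>n. h n * x) (at 0) sequentially"
    using False assms(2,3) by (intro filterlim_atI tendsto_mult_left_zero) auto
  ultimately have "(\<lambda>n. x * ((f (t0 + h n * x) - f t0) / (h n * x) - D)) \<longlonglongrightarrow> 0"
    by (intro tendsto_mult_right_zero) (auto intro: filterlim_compose)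
  moreover have "x * ((f (t0 + h n * x) - f t0) / (h n * x) - D)
    = (f (t0 + h n * x) - f t0 - D * (h n * x)) / h n"
    for n
    using False assms(3)[of n] by (simp add: field_simps)
  ultimately show ?thesis
    by simp
qed simp

lemma (in real_distribution) has_bochner_integral_vanishing_moments_kernel:
  fixes f :: "real \<Rightarrow> real" and g :: "real \<Rightarrow> complex"
  assumes "bounded (range f)" "f \<in> borel_measurable borel"
    and "g \<in> borel_measurable borel" "\<And>x. norm (g x) \<le> C"
    and "has_bochner_integral M g 0" "has_bochner_integral M (\<lambda>x. x * g x) 0"
  shows "has_bochner_integral M (\<lambda>x. (f (t0 + h * x) - f t0 - D * (h * x)) * g x)
    (CLINT x|M. f (t0 + h * x) * g x)"
proof -
  obtain B where B: "\<And>t. \<bar>f t\<bar> \<le> B"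
    using assms(1) by (auto simp: bounded_iff)
  then have "0 \<le> B"
    by (meson abs_ge_zero order.trans)
  have "integrable M (\<lambda>x. f (t0 + h * x) * g x)"
  proof (rule integrable_const_bound[where B = "B * C"])
    show "AE x in M. norm (f (t0 + h * x) * g x) \<le> B * C"
      unfolding norm_mult norm_of_real using B \<open>0 \<le> B\<close> assms(4) by (intro AE_I2 mult_mono) auto
    have "borel_measurable M = borel_measurable borel"
      by (rule measurable_cong_sets) auto
    then show "(\<lambda>x. f (t0 + h * x) * g x) \<in> borel_measurable M"
      using assms(2,3) by measurable
  qed
  then have "has_bochner_integral M (\<lambda>x. f (t0 + h * x) * g x - f t0 * g x - (D * h) * (x * g x))
      ((CLINT x|M. f (t0 + h * x) * g x) - f t0 * 0 - (D * h) * 0)"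
    using assms(5,6)
    by (intro has_bochner_integral_diff has_bochner_integral_mult_right)
      (auto simp: has_bochner_integral_iff)
  moreover have "(\<lambda>x. f (t0 + h * x) * g x - f t0 * g x - (D * h) * (x * g x))
      = (\<lambda>x. (f (t0 + h * x) - f t0 - D * (h * x)) * g x)"
    by (auto simp: algebra_simps)
  ultimately show ?thesis
    by (simp only: mult_zero_right of_real_0 diff_zero)
qed

lemma (in real_distribution) vanishing_moments_kernel_integral_tendsto_zero:
  fixes f :: "real \<Rightarrow> real" and g :: "real \<Rightarrow> complex" and h :: "nat \<Rightarrow> real"
  assumes "DERIV f t0 :> D" "bounded (range f)" "f \<in> borel_measurable borel"
    and "g \<in> borel_measurable borel" "\<And>x. norm (g x) \<le> C"
    and "has_bochner_integral M g 0" "has_bochner_integral M (\<lambda>x. x * g x) 0"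
    and "integrable M (\<lambda>x. \<bar>x\<bar>)"
    and "h \<longlonglongrightarrow> 0" "\<And>n. h n \<noteq> 0"
  shows "(\<lambda>n. (CLINT x|M. f (t0 + h n * x) * g x) / h n) \<longlonglongrightarrow> 0"
proof -
  define R where "R s = f (t0 + s) - f t0 - D * s" for s
  obtain K where K: "\<And>s. \<bar>R s\<bar> \<le> K * \<bar>s\<bar>"
    using DERIV_remainder_le[OF assms(1,2)] unfolding R_def by blast
  then have "0 \<le> K"
    using K[of 1] by auto
  have "has_bochner_integral M (\<lambda>x. of_real (R (h n * x) / h n) * g x)
      ((CLINT x|M. f (t0 + h n * x) * g x) / h n)" for n
    using has_bochner_integral_divide_zero
      [OF has_bochner_integral_vanishing_moments_kernel[OF assms(2-7)],
        of t0 "h n" D "of_real (h n)"]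
    by (simp add: R_def field_simps)
  then have integral_eq: "(CLINT x|M. of_real (R (h n * x) / h n) * g x)
    = (CLINT x|M. f (t0 + h n * x) * g x) / h n"
    for n
    by (rule has_bochner_integral_integral_eq)
  have "(\<lambda>n. CLINT x|M. of_real (R (h n * x) / h n) * g x) \<longlonglongrightarrow> (CLINT x|M. 0)"
  proof (rule integral_dominated_convergence[where w = "\<lambda>x. K * \<bar>x\<bar> * C"])
    show "AE x in M. (\<lambda>n. of_real (R (h n * x) / h n) * g x) \<longlonglongrightarrow> 0"
    proof (intro AE_I2)
      fix x :: real
      have "(\<lambda>n. R (h n * x) / h n) \<longlonglongrightarrow> 0"
        unfolding R_def using assms(1,9,10) by (rule DERIV_remainder_scaled_tendsto_zero)
      then have "(\<lambda>n. complex_of_real (R (h n * x) / h n)) \<longlonglongrightarrow> 0"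
        using tendsto_of_real[where 'a = complex] by fastforce
      then show "(\<lambda>n. of_real (R (h n * x) / h n) * g x) \<longlonglongrightarrow> 0"
        by (rule tendsto_mult_left_zero)
    qed
    show "AE x in M. norm (of_real (R (h n * x) / h n) * g x) \<le> K * \<bar>x\<bar> * C" for n
    proof (intro AE_I2)
      fix x
      have "\<bar>R (h n * x) / h n\<bar> \<le> K * (\<bar>h n\<bar> * \<bar>x\<bar>) / \<bar>h n\<bar>"
        unfolding abs_divide using K[of "h n * x"]
          by (intro divide_right_mono) (auto simp: abs_mult)
      also have "\<dots> = K * \<bar>x\<bar>"
        using assms(10)[of n] by simp
      finally have "\<bar>R (h n * x) / h n\<bar> \<le> K * \<bar>x\<bar>" .
      then show "norm (of_real (R (h n * x) / h n) * g x) \<le> K * \<bar>x\<bar> * C"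
        unfolding norm_mult norm_of_real using assms(5)[of x] \<open>0 \<le> K\<close> by (intro mult_mono) auto
    qed
    have "borel_measurable M = borel_measurable borel"
      by (rule measurable_cong_sets) auto
    then show "(\<lambda>x. of_real (R (h n * x) / h n) * g x) \<in> borel_measurable M" for n
      unfolding R_def using assms(3,4) by measurable
    show "integrable M (\<lambda>x. K * \<bar>x\<bar> * C)"
      using assms(8) by simp
  qed simp
  then show ?thesis
    unfolding integral_eq Bochner_Integration.integral_zero .
qed

section \<open>Weierstrass-type series\<close>

definition weierstrass_fun :: "real \<Rightarrow> real \<Rightarrow> complex \<Rightarrow> real \<Rightarrow> real" where
  "weierstrass_fun a b \<omega> t = (\<Sum>j. Re (\<omega> * iexp (b ^ j * t)) / a ^ j)"

lemma abs_Re_iexp_le: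
  assumes "norm \<omega> \<le> 1"
  shows "\<bar>Re (\<omega> * iexp y)\<bar> \<le> 1"
  using abs_Re_le_cmod[of "\<omega> * iexp y"] assms by (simp add: norm_mult)

lemma abs_weierstrass_term_le:
  assumes "0 < a" "norm \<omega> \<le> 1"
  shows "\<bar>Re (\<omega> * iexp y) / a ^ j\<bar> \<le> (1 / a) ^ j"
  using abs_Re_iexp_le[OF assms(2), of y] assms(1) by (simp add: power_one_over divide_right_mono)

lemma summable_weierstrass_terms:
  assumes "1 < a" "norm \<omega> \<le> 1"
  shows "summable (\<lambda>j. Re (\<omega> * iexp (b ^ j * t)) / a ^ j)"
proof (rule summable_comparison_test'[OF summable_geometric[of "1 / a"]])
  show "norm (Re (\<omega> * iexp (b ^ j * t)) / a ^ j) \<le> (1 / a) ^ j" for j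
    unfolding real_norm_def using assms by (intro abs_weierstrass_term_le) auto
qed (use assms in auto)

lemma bounded_weierstrass_fun:
  assumes "1 < a" "norm \<omega> \<le> 1"
  shows "bounded (range (weierstrass_fun a b \<omega>))"
proof -
  have "summable (\<lambda>j. (1 / a) ^ j)"
    using assms by (intro summable_geometric) auto
  then have "norm (weierstrass_fun a b \<omega> t) \<le> (\<Sum>j. (1 / a) ^ j)" for t
    unfolding weierstrass_fun_def
    by (rule norm_suminf_le[rotated])
      (use assms in \<open>auto simp only: real_norm_def intro!: abs_weierstrass_term_le\<close>)
  then show ?thesis
    unfolding bounded_iff by blast
qed

lemma continuous_on_weierstrass_fun:
  assumes "1 < a" "norm \<omega> \<le> 1"
  shows "continuous_on UNIV (weierstrass_fun a b \<omega>)"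
proof -
  have "summable (\<lambda>j. (1 / a) ^ j)"
    using assms by (intro summable_geometric) auto
  then have "uniform_limit UNIV (\<lambda>n t. \<Sum>j<n. Re (\<omega> * iexp (b ^ j * t)) / a ^ j)
    (weierstrass_fun a b \<omega>) sequentially"
    unfolding weierstrass_fun_def[abs_def]
    by (rule Weierstrass_m_test[rotated])
      (use assms in \<open>auto simp only: real_norm_def intro!: abs_weierstrass_term_le\<close>)
  then show ?thesis
    by (rule uniform_limit_theorem[rotated])
      (use assms in \<open>auto intro!: continuous_intros always_eventually\<close>)
qed

lemma sums_integral_weierstrass_wavelet:
  assumes "1 < a" "norm \<omega> \<le> 1"
  shows "(\<lambda>j. wavelet_response \<sigma> \<omega> (b ^ j * \<theta>) (b ^ j * \<mu>) / of_real (a ^ j))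
    sums (CLINT x|\<gamma>. weierstrass_fun a b \<omega> (\<theta> + \<mu> * x) * wavelet \<sigma> x)"
proof -
  define f where "f j x = of_real (1 / a ^ j)
    * (Re (\<omega> * iexp (b ^ j * \<theta> + b ^ j * \<mu> * x)) * wavelet \<sigma> x)"
    for j x
  have f_le: "norm (f j x) \<le> (1 / a) ^ j * (1 * 4)" for j x
    unfolding f_def norm_mult norm_of_real using assms
    by (intro mult_mono abs_Re_iexp_le norm_wavelet_le) (auto simp: power_one_over)
  have summable_bound: "summable (\<lambda>j. (1 / a) ^ j * (1 * 4))"
    using assms by (intro summable_mult2 summable_geometric) auto
  have f_integral: "has_bochner_integral \<gamma> (f j)
    (wavelet_response \<sigma> \<omega> (b ^ j * \<theta>) (b ^ j * \<mu>) / of_real (a ^ j))"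
    for j
  proof -
    have "has_bochner_integral \<gamma> (f j)
      (of_real (1 / a ^ j) * wavelet_response \<sigma> \<omega> (b ^ j * \<theta>) (b ^ j * \<mu>))"
      unfolding f_def by (rule has_bochner_integral_mult_right[OF has_bochner_integral_Re_wavelet])
    then show ?thesis
      by (simp add: divide_inverse mult.commute)
  qed
  have integrable_f: "integrable \<gamma> (f j)" for j
    using f_integral by (simp add: has_bochner_integral_iff)
  have "AE x in \<gamma>. summable (\<lambda>j. norm (f j x))"
    using f_le by (intro always_eventually allI summable_comparison_test'[OF summable_bound]) auto
  moreover have "summable (\<lambda>j. (\<integral>x. norm (f j x) \<partial>\<gamma>))"
  proof (rule summable_comparison_test'[OF summable_bound])
    show "norm (\<integral>x. norm (f j x) \<partial>\<gamma>) \<le> (1 / a) ^ j * (1 * 4)" for j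
      using gauss.integral_le_const[of "\<lambda>x. norm (f j x)" "(1 / a) ^ j * (1 * 4)"] integrable_f f_le
      by simp
  qed
  ultimately have "(\<lambda>j. wavelet_response \<sigma> \<omega> (b ^ j * \<theta>) (b ^ j * \<mu>) / of_real (a ^ j))
      sums (CLINT x|\<gamma>. \<Sum>j. f j x)"
    using sums_integral[OF integrable_f] f_integral by (simp add: has_bochner_integral_iff)
  moreover have "weierstrass_fun a b \<omega> (\<theta> + \<mu> * x) * wavelet \<sigma> x = (\<Sum>j. f j x)" for x
  proof -
    have "summable (\<lambda>j. Re (\<omega> * iexp (b ^ j * (\<theta> + \<mu> * x))) / a ^ j)"
      using assms by (rule summable_weierstrass_terms)
    then have "complex_of_real (weierstrass_fun a b \<omega> (\<theta> + \<mu> * x)) * wavelet \<sigma> x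
        = (\<Sum>j. of_real (Re (\<omega> * iexp (b ^ j * (\<theta> + \<mu> * x))) / a ^ j) * wavelet \<sigma> x)"
      unfolding weierstrass_fun_def by (simp only: suminf_of_real suminf_mult2 summable_of_real)
    also have "\<dots> = (\<Sum>j. f j x)"
    proof (rule suminf_cong)
      fix j
      have "b ^ j * (\<theta> + \<mu> * x) = b ^ j * \<theta> + b ^ j * \<mu> * x"
        by (simp add: algebra_simps)
      then show "of_real (Re (\<omega> * iexp (b ^ j * (\<theta> + \<mu> * x))) / a ^ j) * wavelet \<sigma> x = f j x"
        unfolding f_def by (simp only:) (simp add: divide_inverse ac_simps)
    qed
    finally show ?thesis .
  qed
  ultimately show ?thesis
    by simp
qed

lemma weierstrass_wavelet_integral_ge:
  assumes "1 < a" "a \<le> b" "norm \<omega> = 1" "admissible_scale b \<sigma>"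
  shows "1 / 4 \<le> b ^ k * norm (CLINT x|\<gamma>. weierstrass_fun a b \<omega> (t0 + \<sigma> / b ^ k * x) * wavelet \<sigma> x)"
proof -
  define I where "I = (CLINT x|\<gamma>. weierstrass_fun a b \<omega> (t0 + \<sigma> / b ^ k * x) * wavelet \<sigma> x)"
  have "(\<lambda>j. wavelet_response \<sigma> \<omega> (b ^ j * t0) (\<sigma> * b ^ j / b ^ k) / of_real (a ^ j)) sums I"
    using sums_integral_weierstrass_wavelet[of a \<omega> \<sigma> b t0 "\<sigma> / b ^ k"] assms
    by (simp add: I_def mult.commute)
  then have "(\<lambda>j. of_real (a ^ k)
    * (wavelet_response \<sigma> \<omega> (b ^ j * t0) (\<sigma> * b ^ j / b ^ k) / of_real (a ^ j)))
      sums (of_real (a ^ k) * I)"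
    by (rule sums_mult)
  then have "(\<Sum>j. of_real (a ^ k / a ^ j) * wavelet_response \<sigma> \<omega> (b ^ j * t0) (\<sigma> * b ^ j / b ^ k))
      = of_real (a ^ k) * I"
    by (simp add: sums_iff)
  then have "1 / 4 \<le> norm (of_real (a ^ k) * I)"
    using norm_lacunary_response_sum_ge[OF assms(1,2,4,3), of k "\<lambda>j. b ^ j * t0"] by simp
  also have "\<dots> = a ^ k * norm I"
    using assms by (simp add: norm_mult norm_power)
  also have "\<dots> \<le> b ^ k * norm I"
    using assms by (intro mult_right_mono power_mono) auto
  finally show ?thesis
    by (simp add: I_def)
qed

lemma weierstrass_fun_nowhere_differentiable:
  assumes "1 < a" "a \<le> b" "norm \<omega> = 1"
  shows "\<not> weierstrass_fun a b \<omega> differentiable (at t0)"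
proof
  let ?F = "weierstrass_fun a b \<omega>"
  assume "?F differentiable (at t0)"
  then obtain D where D: "DERIV ?F t0 :> D"
    using DERIV_deriv_iff_real_differentiable by blast
  have "1 < b"
    using assms by linarith
  then obtain \<sigma> where \<sigma>: "admissible_scale b \<sigma>"
    by (rule admissible_scale_exists)
  then have "0 < \<sigma>"
    by (simp add: admissible_scale_def)
  define I where "I k = (CLINT x|\<gamma>. ?F (t0 + \<sigma> / b ^ k * x) * wavelet \<sigma> x)" for k
  have "(\<lambda>k. I k / (\<sigma> / b ^ k)) \<longlonglongrightarrow> 0"
    unfolding I_def
  proof (rule gauss.vanishing_moments_kernel_integral_tendsto_zero[OF D])
    show "bounded (range ?F)" "?F \<in> borel_measurable borel"
      using assms bounded_weierstrass_fun continuous_on_weierstrass_fun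
      by (auto intro: borel_measurable_continuous_onI)
    show "wavelet \<sigma> \<in> borel_measurable borel"
      using continuous_on_wavelet by (rule borel_measurable_continuous_onI)
    show "norm (wavelet \<sigma> x) \<le> 4" for x
      by (rule norm_wavelet_le)
    show "integrable \<gamma> (\<lambda>x. \<bar>x\<bar>)"
      using integrable_std_normal_distribution_moment[of 1] by simp
    show "(\<lambda>k. \<sigma> / b ^ k) \<longlonglongrightarrow> 0" "\<sigma> / b ^ k \<noteq> 0" for k
      using \<open>1 < b\<close> \<open>0 < \<sigma>\<close> by (auto intro: LIMSEQ_divide_realpow_zero)
  qed (rule has_bochner_integral_wavelet has_bochner_integral_x_wavelet)+
  then obtain k where "norm (I k / (\<sigma> / b ^ k)) < 1 / (4 * \<sigma>)"
    using LIMSEQ_D[of _ 0 "1 / (4 * \<sigma>)"] \<open>0 < \<sigma>\<close> by fastforce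
  moreover have "norm (I k / (\<sigma> / b ^ k)) = b ^ k * norm (I k) / \<sigma>"
    using \<open>1 < b\<close> \<open>0 < \<sigma>\<close> by (simp add: norm_divide norm_mult norm_power)
  ultimately show False
    using weierstrass_wavelet_integral_ge[OF assms \<sigma>, of k t0]
      \<open>0 < \<sigma>\<close> by (simp add: I_def field_simps)
qed

theorem theorem1p1:
  fixes a b :: real
  assumes "1 < a" and "a \<le> b"
  shows "bounded (range (weierstrass_W a b)) \<and> continuous_on UNIV (weierstrass_W a b)
       \<and> bounded (range (weierstrass_S a b)) \<and> continuous_on UNIV (weierstrass_S a b)
       \<and> (\<forall>t0. \<not> weierstrass_W a b differentiable (at t0))
       \<and> (\<forall>t0. \<not> weierstrass_S a b differentiable (at t0))"
proof -
  have "a powr (- real j) = 1 / a ^ j" for j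
    using assms by (simp add: powr_minus powr_realpow divide_inverse)
  then have "weierstrass_W a b = weierstrass_fun a b 1"
    "weierstrass_S a b = weierstrass_fun a b (- \<i>)"
    by (simp_all add: fun_eq_iff weierstrass_W_def weierstrass_S_def
      weierstrass_fun_def Re_exp Im_exp)
  then show ?thesis
    using assms bounded_weierstrass_fun continuous_on_weierstrass_fun
      weierstrass_fun_nowhere_differentiable
    by auto
qed

end
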